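(* Let $n\ge1$, $r\ge1$, $R\subseteq\{1,\dots,n-1\}$ and $\sigma\in S_n$. Then $$(q_r;q_r)_n\sum_{\substack{Z\in(\mathbb{N}^r)^n\\ \sigma_R(Z)=\sigma}} q^Z=\sum_{S\in(\mathbb{N}^{r-1})^n} q_r^{\mathrm{Comaj}_{R,S}(\sigma)}q^S=\sum_{S\in(\mathbb{N}^{r-1})^n} q^{Z_{R,\sigma}(S)}.$$
   Context: $\mathbb{N}=\{0,1,\dots\}$; sequences in $\mathbb{N}^r$ are compared lexicographically. $(q;t)_r=(1-q)(1-qt)\cdots(1-qt^{r-1})$. For $R\subseteq\{1,\dots,n-1\}$ and distinct $a,b\in\{1,\dots,n\}$, write $a\sim_R b$ if all of $\min(a,b),\dots,\max(a,b)-1$ lie in $R$. For $S=(s^1,\dots,s^n)\in(\mathbb{N}^{r'})^n$, index $i$ is read before $j$ if $s^i<s^j$, or $s^i=s^j$ and either ($i<j$ and not $i\sim_R j$) or ($i>j$ and $i\sim_R j$); $\sigma_R(S)\in S_n$ lists the indices in this reading order. For $Z\in(\mathbb{N}^{r'})^n$, $q^Z=\prod_{i=1}^{r'} q_{r'-i+1}^{z^1_i+\cdots+z^n_i}$. For $S\in(\mathbb{N}^{r'})^n$ (if $r'=0$, all $s^i$ are empty and equal) and $\sigma\in S_n$, $\mathrm{Des}_{R,S}(\sigma)$ is the set of $i\in\{1,\dots,n-1\}$ with either $s^{\sigma_i}>s^{\sigma_{i+1}}$, or $s^{\sigma_i}=s^{\sigma_{i+1}}$ and either ($\sigma_{i+1}<\sigma_i$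 and not $\sigma_{i+1}\sim_R\sigma_i$) or ($\sigma_{i+1}>\sigma_i$ and $\sigma_i\sim_R\sigma_{i+1}$); $\mathrm{Comaj}_{R,S}(\sigma)=\sum_{i\in\mathrm{Des}_{R,S}(\sigma)}(n-i)$. $Z_{R,\sigma}(S)\in(\mathbb{N}^{r'+1})^n$ prepends to each $s^j$ a first coordinate $z^j_1$, where $z^{\sigma_i}_1=\#\{j<i:j\in\mathrm{Des}_{R,S}(\sigma)\}$. *)

theory Defs
  imports "HOL-Analysis.Analysis" "HOL-Combinatorics.Permutations"
begin

text \<open>Indices run over {1..n}. An element S of (N^r')^n is a function
  S :: nat => nat list with S j a list of length r' for j in {1..n}
  (coordinate i of s^j is S j ! (i-1)) and S j = [] outside {1..n}.\<close>

definition tuples :: "nat \<Rightarrow> nat \<Rightarrow> (nat \<Rightarrow> nat list) set" where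
  "tuples n r' = {S. (\<forall>j\<in>{1..n}. length (S j) = r') \<and> (\<forall>j. j \<notin> {1..n} \<longrightarrow> S j = [])}"

definition lexless :: "nat list \<Rightarrow> nat list \<Rightarrow> bool" where
  "lexless xs ys \<longleftrightarrow> (\<exists>k < min (length xs) (length ys).
      take k xs = take k ys \<and> xs ! k < ys ! k)"

definition simR :: "nat set \<Rightarrow> nat \<Rightarrow> nat \<Rightarrow> bool" where
  "simR R a b \<longleftrightarrow> a \<noteq> b \<and> (\<forall>k. min a b \<le> k \<and> k < max a b \<longrightarrow> k \<in> R)"

definition read_before :: "nat set \<Rightarrow> (nat \<Rightarrow> nat list) \<Rightarrow> nat \<Rightarrow> nat \<Rightarrow> bool" where
  "read_before R S i j \<longleftrightarrow> lexless (S i) (S j) \<or>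
     (S i = S j \<and> ((i < j \<and> \<not> simR R i j) \<or> (i > j \<and> simR R i j)))"

text \<open>sigma_R(S) as a function i |-> sigma_i: the i-th index in reading order
  is the one preceded by exactly i-1 indices; identity outside {1..n}.\<close>
definition sigmaR :: "nat \<Rightarrow> nat set \<Rightarrow> (nat \<Rightarrow> nat list) \<Rightarrow> nat \<Rightarrow> nat" where
  "sigmaR n R S = (\<lambda>i. if i \<in> {1..n}
      then (THE j. j \<in> {1..n} \<and> card {k \<in> {1..n}. read_before R S k j} = i - 1)
      else i)"

definition qmon :: "nat \<Rightarrow> nat \<Rightarrow> (nat \<Rightarrow> real) \<Rightarrow> (nat \<Rightarrow> nat list) \<Rightarrow> real" where
  "qmon n r' q Z = (\<Prod>i\<in>{1..r'}. q (r' - i + 1) ^ (\<Sum>j\<in>{1..n}. Z j ! (i - 1)))"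

definition qpoch :: "real \<Rightarrow> real \<Rightarrow> nat \<Rightarrow> real" where
  "qpoch a t m = (\<Prod>k<m. 1 - a * t ^ k)"

definition DesRS :: "nat \<Rightarrow> nat set \<Rightarrow> (nat \<Rightarrow> nat list) \<Rightarrow> (nat \<Rightarrow> nat) \<Rightarrow> nat set" where
  "DesRS n R S \<sigma> = {i \<in> {1..n-1}.
      lexless (S (\<sigma> (i+1))) (S (\<sigma> i)) \<or>
      (S (\<sigma> i) = S (\<sigma> (i+1)) \<and>
        ((\<sigma> (i+1) < \<sigma> i \<and> \<not> simR R (\<sigma> (i+1)) (\<sigma> i)) \<or>
         (\<sigma> (i+1) > \<sigma> i \<and> simR R (\<sigma> i) (\<sigma> (i+1)))))}"

definition ComajRS :: "nat \<Rightarrow> nat set \<Rightarrow> (nat \<Rightarrow> nat list) \<Rightarrow> (nat \<Rightarrow> nat) \<Rightarrow> nat" where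
  "ComajRS n R S \<sigma> = (\<Sum>i\<in>DesRS n R S \<sigma>. n - i)"

definition ZRsigma :: "nat \<Rightarrow> nat set \<Rightarrow> (nat \<Rightarrow> nat) \<Rightarrow> (nat \<Rightarrow> nat list) \<Rightarrow> nat \<Rightarrow> nat list" where
  "ZRsigma n R \<sigma> S = (\<lambda>j. if j \<in> {1..n}
      then card {k \<in> DesRS n R S \<sigma>. k < (THE i. i \<in> {1..n} \<and> \<sigma> i = j)} # S j
      else [])"

end

(* Split off the first coordinate.  A tuple Z in (N^r)^n has sigma_R(Z) = sigma iff its tail S lies
   in (N^(r-1))^n and its first coordinates h_i = z^(sigma_i)_1 are weakly increasing in i, strictly
   at the descents Des_{R,S}(sigma).  These chains are exactly h_i = d_1 + ... + d_i + #{descents < i}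
   with d in N^n arbitrary, so the fibre is parametrised by (S, d) with weight
   q_r^(Comaj_{R,S}(sigma) + sum_k (n-k+1) d_k) q^S.  Summing over d gives 1/(q_r;q_r)_n, and d = 0
   gives Z_{R,sigma}(S). *)

theory Submission
  imports Defs "HOL-Library.List_Lexorder"
begin

(* Both Infinite_Sum and Infinite_Set_Sum provide this notation; the former is meant here. *)
no_notation Infinite_Set_Sum.abs_summable_on (infix \<open>abs'_summable'_on\<close> 50)

lemma lexless_iff_less: "length xs = length ys \<Longrightarrow> lexless xs ys \<longleftrightarrow> xs < ys"
  unfolding lexless_def list_less_def lexord_take_index_conv by auto

text \<open>Indices \<open>i < j\<close> are \<open>R\<close>-related iff \<open>{i..<j} \<subseteq> R\<close>, i.e. iff they lie in the same block
  of consecutive \<open>R\<close>-related indices; ties in the reading order are broken by block, then by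
  reversed position.\<close>

definition block_index :: "nat set \<Rightarrow> nat \<Rightarrow> nat" where
  "block_index R i = card ({..<i} - R)"

lemma block_index_add:
  assumes "i \<le> j"
  shows "block_index R j = block_index R i + card ({i..<j} - R)"
proof -
  have "({..<i} - R) \<union> ({i..<j} - R) = {..<j} - R"
    using assms by auto
  moreover have "card (({..<i} - R) \<union> ({i..<j} - R)) = card ({..<i} - R) + card ({i..<j} - R)"
    by (rule card_Un_disjoint) auto
  ultimately show ?thesis
    by (simp add: block_index_def)
qed

lemma simR_iff_block_index:
  assumes "i < j"
  shows "simR R i j \<longleftrightarrow> block_index R i = block_index R j"
proof -
  have "simR R i j \<longleftrightarrow> {i..<j} - R = {}"
    using assms unfolding simR_def by (auto simp: min_def max_def)
  also have "\<dots> \<longleftrightarrow> block_index R i = block_index R j"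
    using block_index_add[of i j R] assms by simp
  finally show ?thesis .
qed

lemma simR_commute: "simR R i j \<longleftrightarrow> simR R j i"
  unfolding simR_def by (auto simp: min.commute max.commute)

lemma read_before_iff:
  assumes "length (S i) = length (S j)"
  shows "read_before R S i j \<longleftrightarrow> S i < S j \<or> S i = S j \<and>
    (block_index R i < block_index R j \<or> block_index R i = block_index R j \<and> j < i)"
proof -
  have mono: "block_index R i \<le> block_index R j" if "i \<le> j" for i j
    using block_index_add[OF that, of R] by simp
  have "(i < j \<and> \<not> simR R i j) \<or> (i > j \<and> simR R i j) \<longleftrightarrow>
      block_index R i < block_index R j \<or> block_index R i = block_index R j \<and> j < i"
    using simR_iff_block_index[of i j R] simR_iff_block_index[of j i R] mono[of i j] mono[of j i]
    by (cases i j rule: linorder_cases) (auto simp: simR_commute[of R i j])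
  then show ?thesis
    unfolding read_before_def lexless_iff_less[OF assms] by simp
qed

definition rank_in :: "nat \<Rightarrow> (nat \<Rightarrow> nat \<Rightarrow> bool) \<Rightarrow> nat \<Rightarrow> nat" where
  "rank_in n before j = card {k \<in> {1..n}. before k j}"

locale reading_order =
  fixes n :: nat and before :: "nat \<Rightarrow> nat \<Rightarrow> bool"
  assumes irrefl: "\<And>a. a \<in> {1..n} \<Longrightarrow> \<not> before a a"
    and trans: "\<And>a b c. a \<in> {1..n} \<Longrightarrow> b \<in> {1..n} \<Longrightarrow> c \<in> {1..n} \<Longrightarrow>
      before a b \<Longrightarrow> before b c \<Longrightarrow> before a c"
    and total: "\<And>a b. a \<in> {1..n} \<Longrightarrow> b \<in> {1..n} \<Longrightarrow> a \<noteq> b \<Longrightarrow> before a b \<or> before b a"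
begin

lemma rank_in_strict_mono:
  assumes "a \<in> {1..n}" "b \<in> {1..n}" "before a b"
  shows "rank_in n before a < rank_in n before b"
  unfolding rank_in_def
proof (rule psubset_card_mono)
  show "{k \<in> {1..n}. before k a} \<subset> {k \<in> {1..n}. before k b}"
    using assms irrefl trans by blast
qed simp

lemma bij_betw_rank_in: "bij_betw (rank_in n before) {1..n} {0..<n}"
proof -
  have inj: "inj_on (rank_in n before) {1..n}"
    by (rule inj_onI) (metis total rank_in_strict_mono less_irrefl)
  have "rank_in n before j < n" if "j \<in> {1..n}" for j
  proof -
    have "{k \<in> {1..n}. before k j} \<subseteq> {1..n} - {j}"
      using irrefl that by auto
    then have "rank_in n before j \<le> card ({1..n} - {j})"
      unfolding rank_in_def by (intro card_mono) auto
    then show ?thesis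
      using that by (cases n) auto
  qed
  then have "rank_in n before ` {1..n} \<subseteq> {0..<n}"
    by auto
  moreover have "card (rank_in n before ` {1..n}) = card {0..<n}"
    using card_image[OF inj] by simp
  ultimately show ?thesis
    using inj by (simp add: bij_betw_def card_subset_eq)
qed

lemma The_rank_in_eq_iff:
  assumes "i \<in> {1..n}" "j \<in> {1..n}"
  shows "(THE j'. j' \<in> {1..n} \<and> rank_in n before j' = i - 1) = j \<longleftrightarrow> rank_in n before j = i - 1"
proof -
  have inj: "inj_on (rank_in n before) {1..n}"
    using bij_betw_rank_in by (rule bij_betw_imp_inj_on)
  have "i - 1 \<in> rank_in n before ` {1..n}"
    unfolding bij_betw_imp_surj_on[OF bij_betw_rank_in] using assms(1) by auto
  then obtain j0 where j0: "j0 \<in> {1..n}" "rank_in n before j0 = i - 1"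
    by (metis imageE)
  have "(THE j'. j' \<in> {1..n} \<and> rank_in n before j' = i - 1) = j0"
  proof (rule the_equality)
    show "j' = j0" if "j' \<in> {1..n} \<and> rank_in n before j' = i - 1" for j'
      using inj_onD[OF inj, of j' j0] that j0 by simp
  qed (use j0 in simp)
  then show ?thesis
    using j0 inj_onD[OF inj, of j j0] assms(2) by auto
qed

lemma chain_before:
  assumes perm: "\<sigma> permutes {1..n}" and chain: "\<forall>i \<in> {1..<n}. before (\<sigma> i) (\<sigma> (Suc i))"
  shows "1 \<le> a \<Longrightarrow> a < b \<Longrightarrow> b \<le> n \<Longrightarrow> before (\<sigma> a) (\<sigma> b)"
proof (induction b rule: less_induct)
  case (less b)
  then obtain b' where b': "b = Suc b'" "a \<le> b'"
    by (cases b) auto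
  then show ?case
    using less chain permutes_in_image[OF perm] trans[of "\<sigma> a" "\<sigma> b'" "\<sigma> b"]
    by (cases "a = b'") auto
qed

lemma predecessors_of_chain:
  assumes perm: "\<sigma> permutes {1..n}" and chain: "\<forall>i \<in> {1..<n}. before (\<sigma> i) (\<sigma> (Suc i))"
    and i: "i \<in> {1..n}"
  shows "{k \<in> {1..n}. before k (\<sigma> i)} = \<sigma> ` {1..<i}"
proof (intro equalityI subsetI)
  fix k assume k: "k \<in> {k \<in> {1..n}. before k (\<sigma> i)}"
  then have "k \<in> \<sigma> ` {1..n}"
    using permutes_image[OF perm] by simp
  then obtain m where m: "m \<in> {1..n}" "k = \<sigma> m"
    by (rule imageE)
  have "\<not> i \<le> m"
  proof
    assume "i \<le> m"
    then have "k = \<sigma> i \<or> before (\<sigma> i) k"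
      using chain_before[OF perm chain, of i m] m i by (auto simp: le_less)
    then show False
      using k irrefl trans[of k "\<sigma> i" k] permutes_in_image[OF perm] i by auto
  qed
  then show "k \<in> \<sigma> ` {1..<i}"
    using m by auto
next
  fix k assume "k \<in> \<sigma> ` {1..<i}"
  then obtain m where m: "m \<in> {1..<i}" "k = \<sigma> m"
    by (rule imageE)
  then show "k \<in> {k \<in> {1..n}. before k (\<sigma> i)}"
    using chain_before[OF perm chain, of m i] i permutes_in_image[OF perm, of m] by auto
qed

lemma rank_in_permutation_iff:
  assumes perm: "\<sigma> permutes {1..n}"
  shows "(\<forall>i \<in> {1..n}. rank_in n before (\<sigma> i) = i - 1) \<longleftrightarrow>
    (\<forall>i \<in> {1..<n}. before (\<sigma> i) (\<sigma> (Suc i)))"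
proof
  assume rank: "\<forall>i \<in> {1..n}. rank_in n before (\<sigma> i) = i - 1"
  show "\<forall>i \<in> {1..<n}. before (\<sigma> i) (\<sigma> (Suc i))"
  proof
    fix i assume i: "i \<in> {1..<n}"
    then have in_range: "\<sigma> i \<in> {1..n}" "\<sigma> (Suc i) \<in> {1..n}"
      using permutes_in_image[OF perm] by auto
    moreover have "\<sigma> i \<noteq> \<sigma> (Suc i)"
      using permutes_inj[OF perm] by (metis injD n_not_Suc_n)
    moreover have "rank_in n before (\<sigma> i) < rank_in n before (\<sigma> (Suc i))"
      using rank[rule_format, of i] rank[rule_format, of "Suc i"] i by simp
    then have "\<not> before (\<sigma> (Suc i)) (\<sigma> i)"
      using rank_in_strict_mono[OF in_range(2,1)] by (meson less_asym)
    ultimately show "before (\<sigma> i) (\<sigma> (Suc i))"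
      using total by blast
  qed
next
  assume chain: "\<forall>i \<in> {1..<n}. before (\<sigma> i) (\<sigma> (Suc i))"
  have "inj_on \<sigma> {1..<i}" for i
    using permutes_inj[OF perm] by (simp add: inj_on_def inj_def)
  then show "\<forall>i \<in> {1..n}. rank_in n before (\<sigma> i) = i - 1"
    using predecessors_of_chain[OF perm chain] by (simp add: rank_in_def card_image)
qed

end

lemma tuples_length: "S \<in> tuples n r \<Longrightarrow> j \<in> {1..n} \<Longrightarrow> length (S j) = r"
  by (simp add: tuples_def)

lemma tuples_outside: "S \<in> tuples n r \<Longrightarrow> j \<notin> {1..n} \<Longrightarrow> S j = []"
  by (simp add: tuples_def)

lemma read_before_irrefl: "\<not> read_before R S a a"
  by (simp add: read_before_def lexless_def)

context
  fixes R :: "nat set" and S :: "nat \<Rightarrow> nat list" and n r :: nat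
  assumes S: "S \<in> tuples n r"
begin

lemma read_before_trans:
  "a \<in> {1..n} \<Longrightarrow> b \<in> {1..n} \<Longrightarrow> c \<in> {1..n} \<Longrightarrow>
    read_before R S a b \<Longrightarrow> read_before R S b c \<Longrightarrow> read_before R S a c"
  using S by (auto simp add: read_before_iff tuples_length dest: less_trans)

lemma read_before_total:
  "a \<in> {1..n} \<Longrightarrow> b \<in> {1..n} \<Longrightarrow> a \<noteq> b \<Longrightarrow> read_before R S a b \<or> read_before R S b a"
  using S linorder_less_linear[of "S a" "S b"] linorder_less_linear[of "block_index R a" "block_index R b"]
  by (auto simp add: read_before_iff tuples_length)

lemma sigmaR_eq_iff:
  assumes perm: "\<sigma> permutes {1..n}"
  shows "sigmaR n R S = \<sigma> \<longleftrightarrow> (\<forall>i \<in> {1..<n}. read_before R S (\<sigma> i) (\<sigma> (Suc i)))"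
proof -
  interpret reading_order n "read_before R S"
    by unfold_locales (rule read_before_irrefl read_before_trans read_before_total; assumption)+
  have outside: "sigmaR n R S i = \<sigma> i" if "i \<notin> {1..n}" for i
    using that permutes_not_in[OF perm that] by (auto simp: sigmaR_def)
  have inside: "sigmaR n R S i = \<sigma> i \<longleftrightarrow> rank_in n (read_before R S) (\<sigma> i) = i - 1"
    if "i \<in> {1..n}" for i
    using The_rank_in_eq_iff[OF that permutes_in_image[OF perm, THEN iffD2, OF that]] that
    unfolding sigmaR_def rank_in_def by simp
  have "sigmaR n R S = \<sigma> \<longleftrightarrow> (\<forall>i \<in> {1..n}. sigmaR n R S i = \<sigma> i)"
    using outside by (metis ext)
  also have "\<dots> \<longleftrightarrow> (\<forall>i \<in> {1..n}. rank_in n (read_before R S) (\<sigma> i) = i - 1)"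
    using inside by simp
  also have "\<dots> \<longleftrightarrow> (\<forall>i \<in> {1..<n}. read_before R S (\<sigma> i) (\<sigma> (Suc i)))"
    by (rule rank_in_permutation_iff[OF perm])
  finally show ?thesis .
qed

end

definition cons_tuple :: "nat \<Rightarrow> (nat \<Rightarrow> nat) \<Rightarrow> (nat \<Rightarrow> nat list) \<Rightarrow> nat \<Rightarrow> nat list" where
  "cons_tuple n h S = (\<lambda>j. if j \<in> {1..n} then h j # S j else [])"

lemma cons_tuple_in_tuples: "S \<in> tuples n r \<Longrightarrow> cons_tuple n h S \<in> tuples n (Suc r)"
  by (simp add: tuples_def cons_tuple_def)

lemma tl_cons_tuple: "S \<in> tuples n r \<Longrightarrow> (\<lambda>j. tl (cons_tuple n h S j)) = S"
  by (auto simp: cons_tuple_def tuples_outside)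

lemma hd_cons_tuple: "j \<in> {1..n} \<Longrightarrow> hd (cons_tuple n h S j) = h j"
  by (simp add: cons_tuple_def)

lemma tl_in_tuples: "Z \<in> tuples n (Suc r) \<Longrightarrow> (\<lambda>j. tl (Z j)) \<in> tuples n r"
  by (simp add: tuples_def)

lemma cons_tuple_cong:
  "(\<And>j. j \<in> {1..n} \<Longrightarrow> h j = h' j) \<Longrightarrow> cons_tuple n h S = cons_tuple n h' S"
  by (simp add: cons_tuple_def fun_eq_iff)

lemma cons_tuple_hd_tl:
  assumes "Z \<in> tuples n (Suc r)"
  shows "cons_tuple n (\<lambda>j. hd (Z j)) (\<lambda>j. tl (Z j)) = Z"
proof
  fix j
  show "cons_tuple n (\<lambda>j. hd (Z j)) (\<lambda>j. tl (Z j)) j = Z j"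
    using tuples_length[OF assms, of j] tuples_outside[OF assms, of j]
    by (cases "Z j") (auto simp: cons_tuple_def)
qed

lemma bij_betw_cons_tuple:
  "bij_betw (\<lambda>(S, h). cons_tuple n h S) (tuples n r \<times> (PiE {1..n} (\<lambda>_. UNIV))) (tuples n (Suc r))"
proof (rule bij_betw_byWitness[where f' = "\<lambda>Z. (\<lambda>j. tl (Z j), restrict (\<lambda>j. hd (Z j)) {1..n})"])
  show "\<forall>Z \<in> tuples n (Suc r). (\<lambda>(S, h). cons_tuple n h S)
      (\<lambda>j. tl (Z j), restrict (\<lambda>j. hd (Z j)) {1..n}) = Z"
  proof
    fix Z assume "Z \<in> tuples n (Suc r)"
    then show "(\<lambda>(S, h). cons_tuple n h S) (\<lambda>j. tl (Z j), restrict (\<lambda>j. hd (Z j)) {1..n}) = Z"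
      using cons_tuple_cong[of n "restrict (\<lambda>j. hd (Z j)) {1..n}" "\<lambda>j. hd (Z j)"]
      by (simp add: cons_tuple_hd_tl)
  qed
qed (auto simp: tl_cons_tuple hd_cons_tuple cons_tuple_in_tuples tl_in_tuples PiE_iff extensional_def)

lemma qmon_cons_tuple:
  "qmon n (Suc r) q (cons_tuple n h S) = q (Suc r) ^ (\<Sum>j\<in>{1..n}. h j) * qmon n r q S"
proof -
  have "qmon n (Suc r) q (cons_tuple n h S) = q (Suc r) ^ (\<Sum>j\<in>{1..n}. h j) *
      (\<Prod>i\<in>{Suc 1..Suc r}. q (Suc r - i + 1) ^ (\<Sum>j\<in>{1..n}. cons_tuple n h S j ! (i - 1)))"
    unfolding qmon_def by (subst prod.atLeast_Suc_atMost) (auto simp: cons_tuple_def)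
  also have "(\<Prod>i\<in>{Suc 1..Suc r}. q (Suc r - i + 1) ^ (\<Sum>j\<in>{1..n}. cons_tuple n h S j ! (i - 1)))
      = qmon n r q S"
    unfolding qmon_def prod.shift_bounds_cl_Suc_ivl by (simp add: cons_tuple_def)
  finally show ?thesis .
qed

lemma DesRS_iff: "i \<in> DesRS n R S \<sigma> \<longleftrightarrow> i \<in> {1..<n} \<and> read_before R S (\<sigma> (Suc i)) (\<sigma> i)"
  unfolding DesRS_def read_before_def by (auto simp: simR_commute)

lemma read_before_cons_tuple:
  assumes "S \<in> tuples n r" "a \<in> {1..n}" "b \<in> {1..n}"
  shows "read_before R (cons_tuple n h S) a b \<longleftrightarrow> h a < h b \<or> h a = h b \<and> read_before R S a b"
  using assms by (auto simp: read_before_iff cons_tuple_def tuples_length)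

lemma sigmaR_cons_tuple_iff:
  assumes S: "S \<in> tuples n r" and perm: "\<sigma> permutes {1..n}"
  shows "sigmaR n R (cons_tuple n h S) = \<sigma> \<longleftrightarrow>
    (\<forall>i \<in> {1..<n}. h (\<sigma> i) + of_bool (i \<in> DesRS n R S \<sigma>) \<le> h (\<sigma> (Suc i)))"
proof -
  have step: "read_before R (cons_tuple n h S) (\<sigma> i) (\<sigma> (Suc i)) \<longleftrightarrow>
      h (\<sigma> i) + of_bool (i \<in> DesRS n R S \<sigma>) \<le> h (\<sigma> (Suc i))" if i: "i \<in> {1..<n}" for i
  proof -
    have in_range: "\<sigma> i \<in> {1..n}" "\<sigma> (Suc i) \<in> {1..n}"
      using i permutes_in_image[OF perm] by auto
    have "\<sigma> i \<noteq> \<sigma> (Suc i)"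
      using permutes_inj[OF perm] by (metis injD n_not_Suc_n)
    then have "i \<in> DesRS n R S \<sigma> \<longleftrightarrow> \<not> read_before R S (\<sigma> i) (\<sigma> (Suc i))"
      using i read_before_total[OF S in_range] read_before_irrefl
        read_before_trans[OF S in_range(1,2,1)] by (auto simp: DesRS_iff)
    then show ?thesis
      using read_before_cons_tuple[OF S in_range] by auto
  qed
  show ?thesis
    using sigmaR_eq_iff[OF cons_tuple_in_tuples[OF S] perm] step by simp
qed

text \<open>For \<open>0 \<notin> D\<close> these two maps are inverse bijections between \<open>\<nat>\<^sup>n\<close> and the sequences
  \<open>h\<^sub>1 \<le> \<dots> \<le> h\<^sub>n\<close> with \<open>h\<^sub>i < h\<^sub>i\<^sub>+\<^sub>1\<close> for \<open>i \<in> D\<close>.\<close>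

definition shifted_partial_sum :: "nat set \<Rightarrow> (nat \<Rightarrow> nat) \<Rightarrow> nat \<Rightarrow> nat" where
  "shifted_partial_sum D d i = (\<Sum>k\<in>{1..i}. d k) + card {k \<in> D. k < i}"

definition shifted_difference :: "nat set \<Rightarrow> (nat \<Rightarrow> nat) \<Rightarrow> nat \<Rightarrow> nat" where
  "shifted_difference D h i = h i - (if i = 1 then 0 else h (i - 1) + of_bool (i - 1 \<in> D))"

lemma shifted_partial_sum_0 [simp]: "shifted_partial_sum D d 0 = 0"
  by (simp add: shifted_partial_sum_def)

lemma shifted_partial_sum_Suc:
  "shifted_partial_sum D d (Suc i) = shifted_partial_sum D d i + d (Suc i) + of_bool (i \<in> D)"
proof -
  have "{k \<in> D. k < Suc i} = {k \<in> D. k < i} \<union> (if i \<in> D then {i} else {})"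
    by (auto simp: less_Suc_eq)
  then have "card {k \<in> D. k < Suc i} = card {k \<in> D. k < i} + of_bool (i \<in> D)"
    by simp
  then show ?thesis
    by (simp add: shifted_partial_sum_def)
qed

lemma shifted_partial_sum_cong:
  "(\<And>k. k \<in> {1..i} \<Longrightarrow> d k = d' k) \<Longrightarrow> shifted_partial_sum D d i = shifted_partial_sum D d' i"
  by (simp add: shifted_partial_sum_def)

lemma shifted_difference_partial_sum:
  assumes "0 \<notin> D" "1 \<le> i"
  shows "shifted_difference D (shifted_partial_sum D d) i = d i"
proof (cases i)
  case (Suc i')
  then show ?thesis
    using assms by (cases i') (auto simp: shifted_difference_def shifted_partial_sum_Suc)
qed (use assms in simp)

lemma shifted_partial_sum_difference:
  assumes "0 \<notin> D" and chain: "\<forall>i \<in> {1..<n}. h i + of_bool (i \<in> D) \<le> h (Suc i)"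
  shows "i \<in> {1..n} \<Longrightarrow> shifted_partial_sum D (shifted_difference D h) i = h i"
proof (induction i)
  case (Suc i)
  show ?case
  proof (cases i)
    case 0
    then show ?thesis
      using assms(1) by (simp add: shifted_partial_sum_Suc shifted_difference_def)
  next
    case (Suc i')
    then have "h i + of_bool (i \<in> D) \<le> h (Suc i)"
      using chain Suc.prems by simp
    then show ?thesis
      using Suc.IH Suc.prems \<open>i = Suc i'\<close> by (simp add: shifted_partial_sum_Suc shifted_difference_def)
  qed
qed simp

lemma sum_shifted_partial_sum:
  assumes "D \<subseteq> {..<n}"
  shows "(\<Sum>i\<in>{1..n}. shifted_partial_sum D d i) = (\<Sum>k\<in>{1..n}. (n - k + 1) * d k) + (\<Sum>k\<in>D. n - k)"
proof -
  have fin: "finite D"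
    using assms finite_subset by blast
  have "(\<Sum>i\<in>{1..n}. \<Sum>k\<in>{1..i}. d k) = (\<Sum>i\<in>{1..n}. \<Sum>k\<in>{k\<in>{1..n}. k \<le> i}. d k)"
    by (intro sum.cong) auto
  also have "\<dots> = (\<Sum>k\<in>{1..n}. \<Sum>i\<in>{i\<in>{1..n}. k \<le> i}. d k)"
    by (rule sum.swap_restrict) simp_all
  also have "\<dots> = (\<Sum>k\<in>{1..n}. (n - k + 1) * d k)"
  proof (intro sum.cong refl)
    fix k assume k: "k \<in> {1..n}"
    then have "{i \<in> {1..n}. k \<le> i} = {k..n}"
      by auto
    then show "(\<Sum>i\<in>{i \<in> {1..n}. k \<le> i}. d k) = (n - k + 1) * d k"
      using k by (simp add: Suc_diff_le)
  qed
  finally have partial: "(\<Sum>i\<in>{1..n}. \<Sum>k\<in>{1..i}. d k) = (\<Sum>k\<in>{1..n}. (n - k + 1) * d k)" .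
  have "(\<Sum>i\<in>{1..n}. card {k \<in> D. k < i}) = (\<Sum>i\<in>{1..n}. \<Sum>k\<in>{k\<in>D. k < i}. 1)"
    by simp
  also have "\<dots> = (\<Sum>k\<in>D. \<Sum>i\<in>{i\<in>{1..n}. k < i}. 1)"
    by (rule sum.swap_restrict) (simp_all add: fin)
  also have "\<dots> = (\<Sum>k\<in>D. n - k)"
  proof (intro sum.cong refl)
    fix k :: nat
    have "{i \<in> {1..n}. k < i} = {Suc k..n}"
      by auto
    then show "(\<Sum>i\<in>{i \<in> {1..n}. k < i}. 1) = n - k"
      by simp
  qed
  finally show ?thesis
    using partial by (simp add: shifted_partial_sum_def sum.distrib)
qed

definition fibre_tuple ::
    "nat \<Rightarrow> nat set \<Rightarrow> (nat \<Rightarrow> nat) \<Rightarrow> (nat \<Rightarrow> nat list) \<Rightarrow> (nat \<Rightarrow> nat) \<Rightarrow> nat \<Rightarrow> nat list" where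
  "fibre_tuple n R \<sigma> S d = cons_tuple n (\<lambda>j. shifted_partial_sum (DesRS n R S \<sigma>) d (inv \<sigma> j)) S"

definition fibre_coordinates ::
    "nat \<Rightarrow> nat set \<Rightarrow> (nat \<Rightarrow> nat) \<Rightarrow> (nat \<Rightarrow> nat list) \<Rightarrow> (nat \<Rightarrow> nat list) \<times> (nat \<Rightarrow> nat)" where
  "fibre_coordinates n R \<sigma> Z = (\<lambda>j. tl (Z j),
    restrict (shifted_difference (DesRS n R (\<lambda>j. tl (Z j)) \<sigma>) (\<lambda>i. hd (Z (\<sigma> i)))) {1..n})"

lemma DesRS_subset: "DesRS n R S \<sigma> \<subseteq> {1..<n}"
  by (auto simp: DesRS_iff)

context
  fixes n :: nat and R :: "nat set" and \<sigma> :: "nat \<Rightarrow> nat"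
  assumes perm: "\<sigma> permutes {1..n}"
begin

lemma hd_fibre_tuple: "i \<in> {1..n} \<Longrightarrow> hd (fibre_tuple n R \<sigma> S d (\<sigma> i)) = shifted_partial_sum (DesRS n R S \<sigma>) d i"
  using permutes_in_image[OF perm] permutes_inverses(2)[OF perm]
  by (simp add: fibre_tuple_def hd_cons_tuple)

lemma ZRsigma_eq_fibre_tuple: "ZRsigma n R \<sigma> S = fibre_tuple n R \<sigma> S (\<lambda>_. 0)"
proof -
  have "(THE i. i \<in> {1..n} \<and> \<sigma> i = j) = inv \<sigma> j" if "j \<in> {1..n}" for j
    using that permutes_inverses[OF perm] permutes_in_image[OF permutes_inv[OF perm]]
    by (intro the_equality) auto
  then show ?thesis
    by (simp add: ZRsigma_def fibre_tuple_def cons_tuple_def shifted_partial_sum_def fun_eq_iff)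
qed

lemma qmon_fibre_tuple:
  "qmon n (Suc r) q (fibre_tuple n R \<sigma> S d) =
    q (Suc r) ^ (ComajRS n R S \<sigma> + (\<Sum>k\<in>{1..n}. (n - k + 1) * d k)) * qmon n r q S"
proof -
  let ?D = "DesRS n R S \<sigma>"
  have "(\<Sum>j\<in>{1..n}. shifted_partial_sum ?D d (inv \<sigma> j)) = (\<Sum>i\<in>{1..n}. shifted_partial_sum ?D d i)"
    using sum.reindex_bij_betw[OF permutes_imp_bij[OF permutes_inv[OF perm]]] .
  also have "\<dots> = ComajRS n R S \<sigma> + (\<Sum>k\<in>{1..n}. (n - k + 1) * d k)"
    using DesRS_subset[of n R S \<sigma>] by (subst sum_shifted_partial_sum) (auto simp: ComajRS_def)
  finally show ?thesis
    by (simp add: fibre_tuple_def qmon_cons_tuple)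
qed

lemma tl_fibre_tuple: "S \<in> tuples n r \<Longrightarrow> (\<lambda>j. tl (fibre_tuple n R \<sigma> S d j)) = S"
  by (simp add: fibre_tuple_def tl_cons_tuple)

lemma fibre_tuple_in_fibre:
  assumes "S \<in> tuples n r"
  shows "fibre_tuple n R \<sigma> S d \<in> {Z \<in> tuples n (Suc r). sigmaR n R Z = \<sigma>}"
  using assms permutes_inverses(2)[OF perm]
  by (simp add: fibre_tuple_def cons_tuple_in_tuples sigmaR_cons_tuple_iff[OF assms perm]
      shifted_partial_sum_Suc)

lemma fibre_coordinates_fibre_tuple:
  assumes S: "S \<in> tuples n r" and d: "d \<in> PiE {1..n} (\<lambda>_. UNIV)"
  shows "fibre_coordinates n R \<sigma> (fibre_tuple n R \<sigma> S d) = (S, d)"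
  unfolding fibre_coordinates_def tl_fibre_tuple[OF S] prod.inject
proof (intro conjI refl ext)
  fix i
  let ?D = "DesRS n R S \<sigma>"
  have "0 \<notin> ?D"
    using DesRS_subset[of n R S \<sigma>] by auto
  have "shifted_difference ?D (\<lambda>i. hd (fibre_tuple n R \<sigma> S d (\<sigma> i))) i =
      shifted_difference ?D (shifted_partial_sum ?D d) i" if i: "i \<in> {1..n}"
  proof (cases "i = 1")
    case False
    then have i': "i - 1 \<in> {1..n}"
      using i by auto
    show ?thesis
      using hd_fibre_tuple[OF i] hd_fibre_tuple[OF i'] False by (simp add: shifted_difference_def)
  qed (use hd_fibre_tuple[OF i] in \<open>simp add: shifted_difference_def\<close>)
  then have "shifted_difference ?D (\<lambda>i. hd (fibre_tuple n R \<sigma> S d (\<sigma> i))) i = d i" if "i \<in> {1..n}"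
    using that shifted_difference_partial_sum[OF \<open>0 \<notin> ?D\<close>, of i d] by simp
  then show "restrict (shifted_difference ?D (\<lambda>i. hd (fibre_tuple n R \<sigma> S d (\<sigma> i)))) {1..n} i = d i"
    using d by (auto simp: PiE_iff extensional_def)
qed

lemma fibre_tuple_fibre_coordinates:
  assumes Z: "Z \<in> tuples n (Suc r)" "sigmaR n R Z = \<sigma>"
  shows "case_prod (fibre_tuple n R \<sigma>) (fibre_coordinates n R \<sigma> Z) = Z"
proof -
  define S where "S = (\<lambda>j. tl (Z j))"
  let ?D = "DesRS n R S \<sigma>" and ?h = "\<lambda>i. hd (Z (\<sigma> i))"
  have S_tuples: "S \<in> tuples n r"
    unfolding S_def using Z(1) by (rule tl_in_tuples)
  have "sigmaR n R (cons_tuple n (\<lambda>j. hd (Z j)) S) = \<sigma>"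
    unfolding S_def cons_tuple_hd_tl[OF Z(1)] by (fact Z(2))
  then have chain: "\<forall>i \<in> {1..<n}. ?h i + of_bool (i \<in> ?D) \<le> ?h (Suc i)"
    using sigmaR_cons_tuple_iff[OF S_tuples perm] by simp
  have "0 \<notin> ?D"
    using DesRS_subset[of n R S \<sigma>] by auto
  then have "shifted_partial_sum ?D (restrict (shifted_difference ?D ?h) {1..n}) i = ?h i"
    if "i \<in> {1..n}" for i
    using shifted_partial_sum_difference[OF _ chain that] that
    by (subst shifted_partial_sum_cong[where d' = "shifted_difference ?D ?h"]) auto
  then have "shifted_partial_sum ?D (restrict (shifted_difference ?D ?h) {1..n}) (inv \<sigma> j) = hd (Z j)"
    if "j \<in> {1..n}" for j
    using that permutes_in_image[OF permutes_inv[OF perm]] permutes_inverses(1)[OF perm] by simp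
  then have "fibre_tuple n R \<sigma> S (restrict (shifted_difference ?D ?h) {1..n}) =
      cons_tuple n (\<lambda>j. hd (Z j)) S"
    unfolding fibre_tuple_def by (rule cons_tuple_cong)
  also have "\<dots> = Z"
    unfolding S_def by (rule cons_tuple_hd_tl[OF Z(1)])
  finally show ?thesis
    by (simp add: fibre_coordinates_def S_def)
qed

lemma bij_betw_fibre_tuple:
  "bij_betw (case_prod (fibre_tuple n R \<sigma>)) (tuples n r \<times> PiE {1..n} (\<lambda>_. UNIV))
    {Z \<in> tuples n (Suc r). sigmaR n R Z = \<sigma>}"
proof (rule bij_betw_byWitness[where f' = "fibre_coordinates n R \<sigma>"])
  show "\<forall>p \<in> tuples n r \<times> PiE {1..n} (\<lambda>_. UNIV).
      fibre_coordinates n R \<sigma> (case_prod (fibre_tuple n R \<sigma>) p) = p"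
    using fibre_coordinates_fibre_tuple by auto
  show "\<forall>Z \<in> {Z \<in> tuples n (Suc r). sigmaR n R Z = \<sigma>}.
      case_prod (fibre_tuple n R \<sigma>) (fibre_coordinates n R \<sigma> Z) = Z"
    using fibre_tuple_fibre_coordinates by blast
  show "case_prod (fibre_tuple n R \<sigma>) ` (tuples n r \<times> PiE {1..n} (\<lambda>_. UNIV)) \<subseteq>
      {Z \<in> tuples n (Suc r). sigmaR n R Z = \<sigma>}"
    using fibre_tuple_in_fibre by auto
  show "fibre_coordinates n R \<sigma> ` {Z \<in> tuples n (Suc r). sigmaR n R Z = \<sigma>} \<subseteq>
      tuples n r \<times> PiE {1..n} (\<lambda>_. UNIV)"
    by (auto simp: fibre_coordinates_def tl_in_tuples)
qed

end

lemma has_sum_geometric: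
  fixes x :: "'a :: {real_normed_field, banach}"
  assumes "norm x < 1"
  shows "((\<lambda>m. x ^ m) has_sum 1 / (1 - x)) UNIV"
proof (rule norm_summable_imp_has_sum)
  show "summable (\<lambda>m. norm (x ^ m))"
    using assms by (simp add: norm_power summable_geometric)
  show "(\<lambda>m. x ^ m) sums (1 / (1 - x))"
    using geometric_sums[OF assms] by simp
qed

lemma abs_summable_on_Times_mult:
  fixes f :: "'a \<Rightarrow> real" and g :: "'b \<Rightarrow> real"
  assumes "f abs_summable_on A" "g abs_summable_on B"
  shows "(\<lambda>(x, y). f x * g y) abs_summable_on A \<times> B"
proof (rule Infinite_Sum.abs_summable_on_Sigma_iff[THEN iffD2], intro conjI ballI)
  show "(\<lambda>y. (\<lambda>(x, y). f x * g y) (x, y)) abs_summable_on B" for x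
    using summable_on_cmult_right[OF assms(2), of "norm (f x)"] by (simp add: abs_mult)
  have "infsum (\<lambda>y. norm (g y)) B \<ge> 0"
    by (simp add: infsum_nonneg)
  then show "(\<lambda>x. \<Sum>\<^sub>\<infinity>y\<in>B. norm ((\<lambda>(x, y). f x * g y) (x, y))) abs_summable_on A"
    using summable_on_cmult_left[OF assms(1), of "infsum (\<lambda>y. norm (g y)) B"]
    by (simp add: abs_mult infsum_cmult_right')
qed

lemma has_sum_Times_mult:
  fixes f :: "'a \<Rightarrow> real" and g :: "'b \<Rightarrow> real"
  assumes "f abs_summable_on A" "g abs_summable_on B" "(f has_sum a) A" "(g has_sum b) B"
  shows "((\<lambda>(x, y). f x * g y) has_sum a * b) (A \<times> B)"
proof (rule has_sum_SigmaI)
  show "((\<lambda>y. (\<lambda>(x, y). f x * g y) (x, y)) has_sum f x * b) B" for x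
    using has_sum_cmult_right[OF assms(4)] by simp
  show "((\<lambda>x. f x * b) has_sum a * b) A"
    using has_sum_cmult_left[OF assms(3)] .
  show "(\<lambda>(x, y). f x * g y) summable_on A \<times> B"
    using abs_summable_on_Times_mult[OF assms(1,2)] by (rule abs_summable_summable)
qed

lemma
  fixes a :: "'i \<Rightarrow> real"
  assumes fin: "finite I" and a: "\<And>i. i \<in> I \<Longrightarrow> \<bar>a i\<bar> < 1"
  shows abs_summable_on_prod_power_PiE: "(\<lambda>g. \<Prod>i\<in>I. a i ^ g i) abs_summable_on PiE I (\<lambda>_. UNIV)"
    and has_sum_prod_power_PiE:
      "((\<lambda>g. \<Prod>i\<in>I. a i ^ g i) has_sum (\<Prod>i\<in>I. 1 / (1 - a i))) (PiE I (\<lambda>_. UNIV))"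
proof -
  have geometric: "((\<lambda>m. c ^ m) has_sum 1 / (1 - c)) UNIV" "(\<lambda>m. c ^ m) abs_summable_on UNIV"
    if "\<bar>c\<bar> < 1" for c :: real
    using has_sum_geometric[of c] has_sum_geometric[of "\<bar>c\<bar>"] that
    by (auto simp: power_abs dest: has_sum_imp_summable)
  have infsum_eq: "infsum (\<lambda>g. \<Prod>i\<in>I. b i ^ g i) (PiE I (\<lambda>_. UNIV)) = (\<Prod>i\<in>I. 1 / (1 - b i))"
    if "\<And>i. i \<in> I \<Longrightarrow> \<bar>b i\<bar> < 1" for b :: "'i \<Rightarrow> real"
  proof -
    have "infsum (\<lambda>g. \<Prod>i\<in>I. b i ^ g i) (PiE I (\<lambda>_. UNIV)) = (\<Prod>i\<in>I. infsum (\<lambda>m. b i ^ m) UNIV)"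
      using that by (intro infsum_prod_PiE_abs[OF fin] geometric(2)) simp
    also have "\<dots> = (\<Prod>i\<in>I. 1 / (1 - b i))"
      using that by (intro prod.cong refl infsumI geometric(1)) simp
    finally show ?thesis .
  qed
  have "(\<lambda>g. \<Prod>i\<in>I. \<bar>a i\<bar> ^ g i) summable_on PiE I (\<lambda>_. UNIV)"
  proof (rule ccontr)
    \<comment> \<open>an infinite sum that does not exist is 0 by convention\<close>
    assume "\<not> ?thesis"
    then have "(\<Prod>i\<in>I. 1 / (1 - \<bar>a i\<bar>)) = 0"
      using infsum_eq[of "\<lambda>i. \<bar>a i\<bar>"] a infsum_not_exists[of "\<lambda>g. \<Prod>i\<in>I. \<bar>a i\<bar> ^ g i"] by simp
    moreover have "(\<Prod>i\<in>I. 1 / (1 - \<bar>a i\<bar>)) > 0"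
      using a by (intro prod_pos) (simp add: abs_less_iff)
    ultimately show False
      by simp
  qed
  then show abs: "(\<lambda>g. \<Prod>i\<in>I. a i ^ g i) abs_summable_on PiE I (\<lambda>_. UNIV)"
    by (simp add: abs_prod power_abs)
  show "((\<lambda>g. \<Prod>i\<in>I. a i ^ g i) has_sum (\<Prod>i\<in>I. 1 / (1 - a i))) (PiE I (\<lambda>_. UNIV))"
    using has_sum_infsum[OF abs_summable_summable[OF abs]] infsum_eq[of a] a by simp
qed

lemma tuples_0: "tuples n 0 = {\<lambda>_. []}"
  by (auto simp: tuples_def fun_eq_iff) (metis atLeastAtMost_iff)

lemma abs_summable_qmon:
  assumes "\<forall>i \<in> {1..r}. \<bar>q i\<bar> < 1"
  shows "qmon n r q abs_summable_on tuples n r"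
  using assms
proof (induction r)
  case (Suc r)
  have "(\<lambda>(S, h). qmon n r q S * (\<Prod>j\<in>{1..n}. q (Suc r) ^ h j))
      abs_summable_on tuples n r \<times> PiE {1..n} (\<lambda>_. UNIV)"
    using Suc by (intro abs_summable_on_Times_mult abs_summable_on_prod_power_PiE) auto
  then have "(\<lambda>(S, h). qmon n (Suc r) q (cons_tuple n h S))
      abs_summable_on tuples n r \<times> PiE {1..n} (\<lambda>_. UNIV)"
    by (simp add: qmon_cons_tuple power_sum case_prod_beta mult.commute)
  then show ?case
    using summable_on_reindex_bij_betw[OF bij_betw_cons_tuple, of "\<lambda>Z. norm (qmon n (Suc r) q Z)" n r]
    by (simp add: case_prod_beta)
qed (simp add: tuples_0)

lemma qpoch_same_eq: "qpoch a a m = (\<Prod>k\<in>{1..m}. 1 - a ^ k)"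
  by (simp add: qpoch_def prod.atLeast1_atMost_eq)

lemma abs_power_less_1: "\<bar>x\<bar> < 1 \<Longrightarrow> k \<ge> 1 \<Longrightarrow> \<bar>x ^ k\<bar> < (1 :: real)"
  using power_decreasing[of 1 k "\<bar>x\<bar>"] by (simp add: power_abs)

lemma qpoch_same_nonzero: "\<bar>a\<bar> < 1 \<Longrightarrow> qpoch a a m \<noteq> 0"
  unfolding qpoch_same_eq by (force dest: abs_power_less_1)

lemma
  fixes x :: real
  assumes x: "\<bar>x\<bar> < 1"
  shows abs_summable_on_partition_weights:
      "(\<lambda>d. x ^ (\<Sum>k\<in>{1..n}. (n - k + 1) * d k)) abs_summable_on PiE {1..n} (\<lambda>_. UNIV)"
    and has_sum_partition_weights:
      "((\<lambda>d. x ^ (\<Sum>k\<in>{1..n}. (n - k + 1) * d k)) has_sum 1 / qpoch x x n) (PiE {1..n} (\<lambda>_. UNIV))"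
proof -
  have weight: "x ^ (\<Sum>k\<in>{1..n}. (n - k + 1) * d k) = (\<Prod>k\<in>{1..n}. (x ^ (n - k + 1)) ^ d k)" for d
    by (simp only: power_sum power_mult)
  have "(\<Prod>k\<in>{1..n}. 1 / (1 - x ^ (n - k + 1))) = (\<Prod>k\<in>{1..n}. 1 / (1 - x ^ k))"
    by (subst prod.atLeastAtMost_rev) (intro prod.cong refl, auto)
  also have "\<dots> = 1 / qpoch x x n"
    by (simp add: qpoch_same_eq prod_dividef)
  finally have total: "(\<Prod>k\<in>{1..n}. 1 / (1 - x ^ (n - k + 1))) = 1 / qpoch x x n" .
  have "\<bar>x ^ (n - k + 1)\<bar> < 1" for k
    using x by (intro abs_power_less_1) simp_all
  then show "(\<lambda>d. x ^ (\<Sum>k\<in>{1..n}. (n - k + 1) * d k)) abs_summable_on PiE {1..n} (\<lambda>_. UNIV)"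
    and "((\<lambda>d. x ^ (\<Sum>k\<in>{1..n}. (n - k + 1) * d k)) has_sum 1 / qpoch x x n) (PiE {1..n} (\<lambda>_. UNIV))"
    unfolding weight total[symmetric]
    by (intro abs_summable_on_prod_power_PiE has_sum_prod_power_PiE; simp)+
qed

lemma abs_summable_comaj_qmon:
  assumes "\<forall>i \<in> {1..Suc r}. \<bar>q i\<bar> < 1"
  shows "(\<lambda>S. q (Suc r) ^ ComajRS n R S \<sigma> * qmon n r q S) abs_summable_on tuples n r"
proof (rule Infinite_Sum.abs_summable_on_comparison_test)
  show "qmon n r q abs_summable_on tuples n r"
    using assms by (intro abs_summable_qmon) auto
  have "\<bar>q (Suc r)\<bar> ^ k \<le> 1" for k
    using assms[rule_format, of "Suc r"] by (intro power_le_one) auto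
  then show "norm (q (Suc r) ^ ComajRS n R S \<sigma> * qmon n r q S) \<le> norm (qmon n r q S)" for S
    using mult_right_mono[of _ 1 "\<bar>qmon n r q S\<bar>"] by (simp add: abs_mult power_abs)
qed

lemma has_sum_qmon_fibre:
  assumes perm: "\<sigma> permutes {1..n}" and q: "\<forall>i \<in> {1..Suc r}. \<bar>q i\<bar> < 1"
    and M: "((\<lambda>S. q (Suc r) ^ ComajRS n R S \<sigma> * qmon n r q S) has_sum M) (tuples n r)"
  shows "(qmon n (Suc r) q has_sum M * (1 / qpoch (q (Suc r)) (q (Suc r)) n))
    {Z \<in> tuples n (Suc r). sigmaR n R Z = \<sigma>}"
proof -
  let ?x = "q (Suc r)"
  have x: "\<bar>?x\<bar> < 1"
    using q[rule_format, of "Suc r"] by simp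
  have "((\<lambda>(S, d). (?x ^ ComajRS n R S \<sigma> * qmon n r q S) * ?x ^ (\<Sum>k\<in>{1..n}. (n - k + 1) * d k))
      has_sum M * (1 / qpoch ?x ?x n)) (tuples n r \<times> PiE {1..n} (\<lambda>_. UNIV))"
    by (rule has_sum_Times_mult[OF abs_summable_comaj_qmon[OF q] abs_summable_on_partition_weights[OF x]
          M has_sum_partition_weights[OF x]])
  also have "(\<lambda>(S, d). (?x ^ ComajRS n R S \<sigma> * qmon n r q S) * ?x ^ (\<Sum>k\<in>{1..n}. (n - k + 1) * d k)) =
      (\<lambda>p. qmon n (Suc r) q (case_prod (fibre_tuple n R \<sigma>) p))"
    by (simp add: fun_eq_iff qmon_fibre_tuple[OF perm] power_add)
  finally show ?thesis
    unfolding has_sum_reindex_bij_betw[OF bij_betw_fibre_tuple[OF perm]] .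
qed

theorem corollary5:
  fixes n r :: nat and R :: "nat set" and \<sigma> :: "nat \<Rightarrow> nat" and q :: "nat \<Rightarrow> real"
  assumes "n \<ge> 1" and "r \<ge> 1" and "R \<subseteq> {1..n-1}" and "\<sigma> permutes {1..n}"
    and "\<forall>i\<in>{1..r}. \<bar>q i\<bar> < 1"
  shows "\<exists>L. ((\<lambda>Z. qmon n r q Z) has_sum L) {Z \<in> tuples n r. sigmaR n R Z = \<sigma>}
    \<and> ((\<lambda>S. q r ^ ComajRS n R S \<sigma> * qmon n (r - 1) q S) has_sum (qpoch (q r) (q r) n * L))
         (tuples n (r - 1))
    \<and> ((\<lambda>S. qmon n r q (ZRsigma n R \<sigma> S)) has_sum (qpoch (q r) (q r) n * L))
         (tuples n (r - 1))"
proof -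
  obtain r' where r: "r = Suc r'"
    using assms(2) by (cases r) auto
  let ?x = "q (Suc r')"
  have q: "\<forall>i \<in> {1..Suc r'}. \<bar>q i\<bar> < 1"
    using assms(5) r by simp
  obtain M where M: "((\<lambda>S. ?x ^ ComajRS n R S \<sigma> * qmon n r' q S) has_sum M) (tuples n r')"
    using abs_summable_summable[OF abs_summable_comaj_qmon[OF q]] has_sum_infsum by blast
  have "qmon n (Suc r') q (ZRsigma n R \<sigma> S) = ?x ^ ComajRS n R S \<sigma> * qmon n r' q S" for S
    by (simp add: ZRsigma_eq_fibre_tuple[OF assms(4)] qmon_fibre_tuple[OF assms(4)])
  moreover have "qpoch ?x ?x n * (M * (1 / qpoch ?x ?x n)) = M"
    using qpoch_same_nonzero[of ?x] q by simp
  ultimately show ?thesis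
    unfolding r diff_Suc_1 using has_sum_qmon_fibre[OF assms(4) q M] M
    by (intro exI[of _ "M * (1 / qpoch ?x ?x n)"]) simp
qed

end
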